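(* Let $p\ge0$, $q\ge1$, $\mathbf{k}=(k_1,\dots,k_r)$ with $k_i\ge1$, and let $Z\in\tilde V_{\mathbf{k}}(\mathbb{R}^{p,q})$ (if $q=1$, let $Z$ lie in the component $\tilde V_{\mathbf{k}}(\mathbb{R}^{p,1})_\Sigma$ for a fixed $\Sigma\in\prod_i\mathfrak{S}_{k_i}$). Then there is a unique ray partition $Q^Z$ of type $\mathbf{k}$ which is witnessed by $Z$ and has maximal weight among all ray partitions of type $\mathbf{k}$ witnessed by $Z$. If $q=1$, moreover $\Sigma(Q^Z)=\Sigma$.
   Context: $d=p+q$; points of $\mathbb{R}^d$ are written $(\zeta,t)\in\mathbb{R}^{d-1}\times\mathbb{R}$, with projections $\mathrm{pr}_\zeta$, $\mathrm{pr}_t$; $\mathrm{pr}_1:\mathbb{R}^d\to\mathbb{R}^p$ is the projection to the first $p$ coordinates. $\tilde V_{\mathbf{k}}(\mathbb{R}^{p,q})\subseteq\prod_i(\mathbb{R}^d)^{k_i}$ consists of tuples $Z=(z_i^j)$ of pairwise distinct points with $\mathrm{pr}_1(z_i^1)=\dots=\mathrm{pr}_1(z_i^{k_i})$ for each $i$. For $q=1$ and $\Sigma=(\sigma_i)$, $\tilde V_{\mathbf{k}}(\mathbb{R}^{p,1})_\Sigma$ is the set of such $Z$ with $\mathrm{pr}_t(z_i^{\sigma_i(j)})<\mathrm{pr}_t(z_i^{\sigma_i(j+1)})$ for all $i$, $j$. Table $T_{\mathbf{k}}=\{(i,j):1\le i\le r,1\le j\le k_i\}$ with lexicographic order $<$.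 A ray partition $Q$ of type $\mathbf{k}$: a partition of $T_{\mathbf{k}}$ into nonempty pieces $Q_1,\dots,Q_l$, each with a total order $\prec_\beta$, with $\min(Q_1,<)<\dots<\min(Q_l,<)$ and $\min(Q_\beta,\prec_\beta)=\min(Q_\beta,<)$ for all $\beta$. $Q$ is witnessed by $Z$ if (W1) for each $\beta$, all $z_i^j$ with $(i,j)\in Q_\beta$ have the same image under $\mathrm{pr}_\zeta$, and (W2) $(i,j)\prec_\beta(i',j')$ implies $\mathrm{pr}_t(z_i^j)<\mathrm{pr}_t(z_{i'}^{j'})$. The weight of $Q$ is $\omega(Q)=(|Q_1|,\dots,|Q_l|)$, an element of the set $\mathbb{P}(\mathbf{k})$ of sequences of positive integers summing to $|\mathbf{k}|$; these are compared lexicographically after padding with zeros to length $|\mathbf{k}|$. For $q=1$, $\Sigma(Q)=(\sigma_1,\dots,\sigma_r)$ is defined via the stacked total order $\prec$ on $T_{\mathbf{k}}$ (restricting to $\prec_\beta$ on $Q_\beta$, with all elements of $Q_{\beta+1}$ smaller than those of $Q_\beta$): $\sigma_i$ is the unique permutation with $(i,\sigma_i(j))\prec(i,\sigma_i(j+1))$ for all $j$. *)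

theory Defs
  imports Complex_Main "HOL-Combinatorics.Permutations"
begin

(* Conventions: k = [k_1,...,k_r] is a list, k_i = k ! (i-1), indices are 1-based.
   A point of R^d (d = p+q) is a real list of length d; the last coordinate is t,
   pr_zeta = butlast, pr_t = last, pr_1 = take p.
   A configuration Z is a function on the table T_k. *)

definition kth :: "nat list \<Rightarrow> nat \<Rightarrow> nat" where
  "kth k i = k ! (i - 1)"

definition table :: "nat list \<Rightarrow> (nat \<times> nat) set" where
  "table k = {(i, j). 1 \<le> i \<and> i \<le> length k \<and> 1 \<le> j \<and> j \<le> kth k i}"

definition lex_less :: "nat \<times> nat \<Rightarrow> nat \<times> nat \<Rightarrow> bool" where
  "lex_less x y \<longleftrightarrow> fst x < fst y \<or> (fst x = fst y \<and> snd x < snd y)"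

definition pr_zeta :: "real list \<Rightarrow> real list" where "pr_zeta z = butlast z"
definition pr_t :: "real list \<Rightarrow> real" where "pr_t z = last z"
definition pr_1 :: "nat \<Rightarrow> real list \<Rightarrow> real list" where "pr_1 p z = take p z"

definition Vtilde :: "nat \<Rightarrow> nat \<Rightarrow> nat list \<Rightarrow> (nat \<times> nat \<Rightarrow> real list) \<Rightarrow> bool" where
  "Vtilde p q k Z \<longleftrightarrow>
     (\<forall>x\<in>table k. length (Z x) = p + q) \<and> inj_on Z (table k) \<and>
     (\<forall>i j j'. (i, j) \<in> table k \<longrightarrow> (i, j') \<in> table k \<longrightarrow> pr_1 p (Z (i, j)) = pr_1 p (Z (i, j')))"

(* A ray partition is a list of pieces Q_1..Q_l; each piece is a list whose
   list order is the total order \<prec>_\<beta>. *)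
definition ray_partition :: "nat list \<Rightarrow> (nat \<times> nat) list list \<Rightarrow> bool" where
  "ray_partition k Q \<longleftrightarrow>
     (\<forall>B\<in>set Q. B \<noteq> []) \<and> distinct (concat Q) \<and> set (concat Q) = table k \<and>
     (\<forall>B\<in>set Q. \<forall>x\<in>set B. x \<noteq> hd B \<longrightarrow> lex_less (hd B) x) \<and>
     (\<forall>b. Suc b < length Q \<longrightarrow> lex_less (hd (Q ! b)) (hd (Q ! Suc b)))"

definition witnessed :: "(nat \<times> nat \<Rightarrow> real list) \<Rightarrow> (nat \<times> nat) list list \<Rightarrow> bool" where
  "witnessed Z Q \<longleftrightarrow>
     (\<forall>B\<in>set Q. \<forall>x\<in>set B. \<forall>y\<in>set B. pr_zeta (Z x) = pr_zeta (Z y)) \<and>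
     (\<forall>B\<in>set Q. \<forall>a b. a < b \<and> b < length B \<longrightarrow> pr_t (Z (B ! a)) < pr_t (Z (B ! b)))"

definition weight :: "(nat \<times> nat) list list \<Rightarrow> nat list" where
  "weight Q = map length Q"

definition pad :: "nat list \<Rightarrow> nat list \<Rightarrow> nat list" where
  "pad k w = w @ replicate (sum_list k - length w) 0"

definition lex_le :: "nat list \<Rightarrow> nat list \<Rightarrow> bool" where
  "lex_le xs ys \<longleftrightarrow> xs = ys \<or> (xs, ys) \<in> lexord less_than"

definition max_witnessed ::
  "nat list \<Rightarrow> (nat \<times> nat \<Rightarrow> real list) \<Rightarrow> (nat \<times> nat) list list \<Rightarrow> bool" where
  "max_witnessed k Z Q \<longleftrightarrow> ray_partition k Q \<and> witnessed Z Q \<and>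
     (\<forall>Q'. ray_partition k Q' \<and> witnessed Z Q' \<longrightarrow> lex_le (pad k (weight Q')) (pad k (weight Q)))"

definition valid_Sigma :: "nat list \<Rightarrow> (nat \<Rightarrow> nat \<Rightarrow> nat) \<Rightarrow> bool" where
  "valid_Sigma k sig \<longleftrightarrow> (\<forall>i\<in>{1..length k}. sig i permutes {1..kth k i})"

definition in_component :: "nat list \<Rightarrow> (nat \<Rightarrow> nat \<Rightarrow> nat) \<Rightarrow> (nat \<times> nat \<Rightarrow> real list) \<Rightarrow> bool" where
  "in_component k sig Z \<longleftrightarrow>
     (\<forall>i\<in>{1..length k}. \<forall>j. 1 \<le> j \<and> j < kth k i \<longrightarrow>
        pr_t (Z (i, sig i j)) < pr_t (Z (i, sig i (Suc j))))"

(* stacked order \<prec>: list concat (rev Q) (later pieces are smaller) *)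
definition stacked :: "(nat \<times> nat) list list \<Rightarrow> (nat \<times> nat) list" where
  "stacked Q = concat (rev Q)"

definition Sigma_of_eq :: "nat list \<Rightarrow> (nat \<times> nat) list list \<Rightarrow> (nat \<Rightarrow> nat \<Rightarrow> nat) \<Rightarrow> bool" where
  "Sigma_of_eq k Q sig \<longleftrightarrow>
     (\<forall>i\<in>{1..length k}. \<forall>j\<in>{1..kth k i}.
        sig i j = snd (filter (\<lambda>x. fst x = i) (stacked Q) ! (j - 1)))"

end

theory Submission
  imports Defs "HOL-Library.Product_Lexorder"
begin

(* The maximal ray partition is built greedily.  Every ray partition of a finite set S starts
   with a piece headed by the least point h = Min S, and a witnessed piece through h can only
   contain points in the zeta-fibre of h lying at height t >= t h: the first ray of S.  Taking
   this whole ray, sorted by height, is the unique way to make the first weight entry as large as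
   possible; recursing on the remaining points yields a witnessed ray partition from which every
   other one deviates first by a strictly smaller piece, hence has strictly smaller weight.
   Inside a zeta-fibre the points left over after a piece all lie below it, so the stacked order
   restricted to a fibre increases in height.  For q = 1 each row of the table is one fibre, and
   this identifies Sigma(Q^Z) with Sigma. *)

lemma sorted_by_key_exists:
  fixes t :: "'a \<Rightarrow> 'b::linorder"
  assumes "finite A" "inj_on t A"
  shows "\<exists>L. distinct L \<and> set L = A \<and> sorted_wrt (\<lambda>x y. t x < t y) L"
proof -
  obtain xs where xs: "set xs = A" "distinct xs" using finite_distinct_list assms(1) by blast
  define L where "L = sort_key t xs"
  have "set L = A" "distinct L" using xs by (auto simp: L_def)
  moreover have "distinct (map t L)" using \<open>distinct L\<close> \<open>set L = A\<close> assms(2)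
    by (simp add: distinct_map)
  ultimately show ?thesis
    by (intro exI[of _ L]) (simp add: L_def strict_sorted_iff sorted_wrt_map[symmetric])
qed

lemma sorted_by_key_unique:
  fixes t :: "'a \<Rightarrow> 'b::linorder"
  assumes "sorted_wrt (\<lambda>x y. t x < t y) L1" "sorted_wrt (\<lambda>x y. t x < t y) L2"
    and "set L1 = set L2" "inj_on t (set L1)"
  shows "L1 = L2"
proof -
  have "map t L1 = map t L2"
    using assms by (intro strict_sorted_equal) (auto simp: sorted_wrt_map)
  then show ?thesis using assms(3,4) by (simp add: inj_on_map_eq_map)
qed

lemma hd_sorted_by_key:
  fixes t :: "'a \<Rightarrow> 'b::linorder"
  assumes "sorted_wrt (\<lambda>x y. t x < t y) L" "h \<in> set L" "\<forall>x\<in>set L. t h \<le> t x"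
  shows "hd L = h"
proof (cases L)
  case (Cons y ys)
  show ?thesis
  proof (rule ccontr)
    assume "hd L \<noteq> h"
    then have "t y < t h" using assms(1,2) Cons by auto
    then show False using assms(3) Cons by force
  qed
qed (use assms in simp)

section \<open>Ray partitions and the greedy construction\<close>

definition ray_partition_on :: "'a::linorder set \<Rightarrow> 'a list list \<Rightarrow> bool" where
  "ray_partition_on S Q \<longleftrightarrow>
     (\<forall>B\<in>set Q. B \<noteq> []) \<and> distinct (concat Q) \<and> set (concat Q) = S \<and>
     (\<forall>B\<in>set Q. \<forall>x\<in>set B. hd B \<le> x) \<and> sorted_wrt (\<lambda>B B'. hd B < hd B') Q"

definition witnessed_by :: "('a \<Rightarrow> 'b) \<Rightarrow> ('a \<Rightarrow> 'c::linorder) \<Rightarrow> 'a list list \<Rightarrow> bool" where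
  "witnessed_by \<zeta> \<tau> Q \<longleftrightarrow>
     (\<forall>B\<in>set Q. (\<forall>x\<in>set B. \<zeta> x = \<zeta> (hd B)) \<and> sorted_wrt (\<lambda>x y. \<tau> x < \<tau> y) B)"

definition first_ray :: "('a::linorder \<Rightarrow> 'b) \<Rightarrow> ('a \<Rightarrow> 'c::linorder) \<Rightarrow> 'a set \<Rightarrow> 'a set" where
  "first_ray \<zeta> \<tau> S = {x \<in> S. \<zeta> x = \<zeta> (Min S) \<and> \<tau> (Min S) \<le> \<tau> x}"

(* Unlike lexord, this excludes the case that xs is a proper prefix of ys, so it survives
   padding both lists with zeros. *)
definition first_difference_less :: "'a::ord list \<Rightarrow> 'a list \<Rightarrow> bool" where
  "first_difference_less xs ys \<longleftrightarrow> (\<exists>u a b v w. a < b \<and> xs = u @ a # v \<and> ys = u @ b # w)"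

definition dominant_ray_partition ::
  "('a::linorder \<Rightarrow> 'b) \<Rightarrow> ('a \<Rightarrow> 'c::linorder) \<Rightarrow> 'a set \<Rightarrow> 'a list list \<Rightarrow> bool" where
  "dominant_ray_partition \<zeta> \<tau> S Q \<longleftrightarrow>
     ray_partition_on S Q \<and> witnessed_by \<zeta> \<tau> Q \<and>
     sorted_wrt (\<lambda>x y. \<zeta> x = \<zeta> y \<longrightarrow> \<tau> x < \<tau> y) (concat (rev Q)) \<and>
     (\<forall>Q'. ray_partition_on S Q' \<and> witnessed_by \<zeta> \<tau> Q' \<longrightarrow>
        Q' = Q \<or> first_difference_less (map length Q') (map length Q))"

lemma first_difference_less_Cons:
  "first_difference_less xs ys \<Longrightarrow> first_difference_less (n # xs) (n # ys)"
  unfolding first_difference_less_def by (metis append_Cons)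

lemma first_difference_less_append_lexord:
  "first_difference_less xs ys \<Longrightarrow> (xs @ zs, ys @ ws) \<in> lexord less_than"
  unfolding first_difference_less_def by (auto intro: lexord_append_left_rightI)

lemma ray_partition_on_Nil [simp]: "ray_partition_on S [] \<longleftrightarrow> S = {}"
  by (auto simp: ray_partition_on_def)

lemma ray_partition_on_empty: "ray_partition_on {} Q \<longleftrightarrow> Q = []"
  by (cases Q) (auto simp: ray_partition_on_def)

lemma ray_partition_on_Cons:
  "ray_partition_on S (B # Q) \<longleftrightarrow>
     B \<noteq> [] \<and> distinct B \<and> set B \<subseteq> S \<and> hd B = Min S \<and> ray_partition_on (S - set B) Q"
proof
  assume part: "ray_partition_on S (B # Q)"
  then have fin: "finite S" and B: "B \<noteq> []" "set B \<subseteq> S"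
    by (auto simp: ray_partition_on_def)
  have "hd B \<le> x" if "x \<in> S" for x
  proof -
    obtain B' where B': "B' \<in> set (B # Q)" "x \<in> set B'"
      using part \<open>x \<in> S\<close> by (auto simp: ray_partition_on_def)
    then have "hd B' \<le> x" "hd B \<le> hd B'"
      using part by (auto simp: ray_partition_on_def)
    then show ?thesis by simp
  qed
  then have "hd B = Min S" using B fin by (intro Min_eqI[symmetric]) auto
  with part B show "B \<noteq> [] \<and> distinct B \<and> set B \<subseteq> S \<and> hd B = Min S \<and> ray_partition_on (S - set B) Q"
    by (auto simp: ray_partition_on_def)
next
  assume "B \<noteq> [] \<and> distinct B \<and> set B \<subseteq> S \<and> hd B = Min S \<and> ray_partition_on (S - set B) Q"
  then have B: "B \<noteq> []" "distinct B" "set B \<subseteq> S" "hd B = Min S"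
    and rest: "ray_partition_on (S - set B) Q" by blast+
  have "set (concat Q) = S - set B" using rest by (simp add: ray_partition_on_def)
  then have fin: "finite S" by (metis finite_Diff2 finite_set)
  have "hd B < hd B'" if "B' \<in> set Q" for B'
  proof -
    have "hd B' \<in> S - set B"
      using rest that hd_in_set by (fastforce simp: ray_partition_on_def)
    then show ?thesis using B fin hd_in_set[OF B(1)] by (metis DiffD1 DiffD2 Min_le order_le_neq_trans)
  qed
  with B rest fin show "ray_partition_on S (B # Q)"
    by (auto simp: ray_partition_on_def)
qed

lemma Min_in_first_ray: "finite S \<Longrightarrow> S \<noteq> {} \<Longrightarrow> Min S \<in> first_ray \<zeta> \<tau> S"
  by (simp add: first_ray_def)

lemma first_ray_subset: "first_ray \<zeta> \<tau> S \<subseteq> S"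
  by (auto simp: first_ray_def)

lemma inj_on_first_ray:
  "inj_on (\<lambda>x. (\<zeta> x, \<tau> x)) S \<Longrightarrow> inj_on \<tau> (first_ray \<zeta> \<tau> S)"
  by (auto simp: first_ray_def inj_on_def)

lemma first_piece_subset_first_ray:
  assumes "ray_partition_on S (B # Q)" "witnessed_by \<zeta> \<tau> (B # Q)"
  shows "set B \<subseteq> first_ray \<zeta> \<tau> S"
proof
  fix x assume x: "x \<in> set B"
  have B: "B \<noteq> []" "set B \<subseteq> S" "hd B = Min S"
    using assms(1) by (simp_all add: ray_partition_on_Cons)
  have "\<tau> (hd B) \<le> \<tau> x"
    using assms(2) x B(1) by (cases B) (auto simp: witnessed_by_def)
  then show "x \<in> first_ray \<zeta> \<tau> S"
    using assms(2) x B by (auto simp: first_ray_def witnessed_by_def)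
qed

lemma first_ray_list_dominates:
  assumes S: "S \<noteq> {}" "finite S" and inj: "inj_on (\<lambda>x. (\<zeta> x, \<tau> x)) S"
    and L: "distinct L" "set L = first_ray \<zeta> \<tau> S" "sorted_wrt (\<lambda>x y. \<tau> x < \<tau> y) L"
    and Qr: "\<And>Q'. ray_partition_on (S - first_ray \<zeta> \<tau> S) Q' \<Longrightarrow> witnessed_by \<zeta> \<tau> Q' \<Longrightarrow>
               Q' = Qr \<or> first_difference_less (map length Q') (map length Qr)"
    and Q': "ray_partition_on S Q'" "witnessed_by \<zeta> \<tau> Q'"
  shows "Q' = L # Qr \<or> first_difference_less (map length Q') (map length (L # Qr))"
proof -
  let ?A = "first_ray \<zeta> \<tau> S"
  obtain B Qt where BQt: "Q' = B # Qt" using Q'(1) S(1) by (cases Q') auto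
  have B: "distinct B" "set B \<subseteq> ?A" and Qt: "ray_partition_on (S - set B) Qt" "witnessed_by \<zeta> \<tau> Qt"
    using Q' first_piece_subset_first_ray[of S B Qt] unfolding BQt ray_partition_on_Cons
    by (simp_all add: witnessed_by_def)
  show ?thesis
  proof (cases "length B < length L")
    case True
    then show ?thesis unfolding BQt first_difference_less_def by (intro disjI2 exI[of _ "[]"]) auto
  next
    case False
    have finA: "finite ?A" using first_ray_subset S(2) by (rule finite_subset)
    have "card ?A \<le> card (set B)"
      using False distinct_card[OF B(1)] distinct_card[OF L(1)] L(2) by simp
    then have setB: "set B = ?A" using card_seteq[OF finA B(2)] by blast
    have sortedB: "sorted_wrt (\<lambda>x y. \<tau> x < \<tau> y) B" using Q' by (simp add: BQt witnessed_by_def)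
    have "B = L" using sorted_by_key_unique[OF sortedB L(3)] L(2) setB inj_on_first_ray[OF inj] by simp
    moreover have "Qt = Qr \<or> first_difference_less (map length Qt) (map length Qr)"
      using Qr[OF Qt(1)[unfolded setB] Qt(2)] .
    ultimately show ?thesis using first_difference_less_Cons unfolding BQt by auto
  qed
qed

lemma dominant_ray_partition_Cons:
  assumes S: "S \<noteq> {}" "finite S" and inj: "inj_on (\<lambda>x. (\<zeta> x, \<tau> x)) S"
    and L: "distinct L" "set L = first_ray \<zeta> \<tau> S" "sorted_wrt (\<lambda>x y. \<tau> x < \<tau> y) L"
    and Qr: "dominant_ray_partition \<zeta> \<tau> (S - first_ray \<zeta> \<tau> S) Qr"
  shows "dominant_ray_partition \<zeta> \<tau> S (L # Qr)"
proof -
  let ?A = "first_ray \<zeta> \<tau> S"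
  have Qr_part: "ray_partition_on (S - ?A) Qr" and Qr_wit: "witnessed_by \<zeta> \<tau> Qr"
    and Qr_stacked: "sorted_wrt (\<lambda>x y. \<zeta> x = \<zeta> y \<longrightarrow> \<tau> x < \<tau> y) (concat (rev Qr))"
    using Qr by (simp_all add: dominant_ray_partition_def)
  have Qr_dom: "\<And>Q'. ray_partition_on (S - ?A) Q' \<Longrightarrow> witnessed_by \<zeta> \<tau> Q' \<Longrightarrow>
                 Q' = Qr \<or> first_difference_less (map length Q') (map length Qr)"
    using Qr by (simp add: dominant_ray_partition_def)
  have Min_in_L: "Min S \<in> set L" using L(2) Min_in_first_ray[OF S(2,1)] by simp
  have hdL: "hd L = Min S"
    using L(2,3) Min_in_L by (intro hd_sorted_by_key) (auto simp: first_ray_def)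
  have "L \<noteq> []" using Min_in_L by auto
  then have part: "ray_partition_on S (L # Qr)"
    using Qr_part L(1,2) hdL first_ray_subset by (simp add: ray_partition_on_Cons)
  have wit: "witnessed_by \<zeta> \<tau> (L # Qr)"
    using Qr_wit L(2,3) hdL by (auto simp: witnessed_by_def first_ray_def)
  have "sorted_wrt (\<lambda>x y. \<zeta> x = \<zeta> y \<longrightarrow> \<tau> x < \<tau> y) L"
    using L(3) by (rule sorted_wrt_mono_rel[rotated]) simp
  moreover have "\<tau> x < \<tau> y" if "x \<in> set (concat (rev Qr))" "y \<in> set L" "\<zeta> x = \<zeta> y" for x y
    using that Qr_part L(2) by (auto simp: first_ray_def ray_partition_on_def)
  ultimately have stacked: "sorted_wrt (\<lambda>x y. \<zeta> x = \<zeta> y \<longrightarrow> \<tau> x < \<tau> y) (concat (rev (L # Qr)))"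
    using Qr_stacked by (simp add: sorted_wrt_append)
  show ?thesis
    using part wit stacked first_ray_list_dominates[OF S inj L Qr_dom]
    unfolding dominant_ray_partition_def by blast
qed

lemma dominant_ray_partition_exists:
  assumes "finite S" "inj_on (\<lambda>x. (\<zeta> x, \<tau> x)) S"
  shows "\<exists>Q. dominant_ray_partition \<zeta> \<tau> S Q"
  using assms
proof (induction S rule: finite_psubset_induct)
  case (psubset S)
  show ?case
  proof (cases "S = {}")
    case True
    then show ?thesis
      by (intro exI[of _ "[]"]) (simp add: dominant_ray_partition_def ray_partition_on_empty witnessed_by_def)
  next
    case False
    let ?A = "first_ray \<zeta> \<tau> S"
    have "finite ?A" using first_ray_subset psubset.hyps(1) by (rule finite_subset)
    then obtain L where L: "distinct L" "set L = ?A" "sorted_wrt (\<lambda>x y. \<tau> x < \<tau> y) L"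
      using sorted_by_key_exists[OF _ inj_on_first_ray[OF psubset.prems]] by blast
    have "S - ?A \<subset> S"
      using Min_in_first_ray[OF psubset.hyps(1) False] first_ray_subset[of \<zeta> \<tau> S] by (intro psubsetI) auto
    moreover have "inj_on (\<lambda>x. (\<zeta> x, \<tau> x)) (S - ?A)" using psubset.prems by (rule inj_on_diff)
    ultimately obtain Qr where "dominant_ray_partition \<zeta> \<tau> (S - ?A) Qr" using psubset.IH by blast
    then show ?thesis using dominant_ray_partition_Cons[OF False psubset.hyps(1) psubset.prems L] by blast
  qed
qed

section \<open>Configurations of points with a height coordinate\<close>

lemma lex_less_iff_less: "lex_less x y \<longleftrightarrow> x < y"
  by (simp add: lex_less_def less_prod_def')

lemma ray_partition_iff: "ray_partition k Q \<longleftrightarrow> ray_partition_on (table k) Q"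
proof -
  have "transp (\<lambda>B B' :: (nat \<times> nat) list. hd B < hd B')" by (auto intro: transpI)
  then have "(\<forall>b. Suc b < length Q \<longrightarrow> hd (Q ! b) < hd (Q ! Suc b)) \<longleftrightarrow> sorted_wrt (\<lambda>B B'. hd B < hd B') Q"
    by (simp add: sorted_wrt_iff_nth_Suc_transp)
  moreover have "(\<forall>B\<in>set Q. \<forall>x\<in>set B. x \<noteq> hd B \<longrightarrow> hd B < x) \<longleftrightarrow> (\<forall>B\<in>set Q. \<forall>x\<in>set B. hd B \<le> x)"
    by (metis order.order_iff_strict)
  ultimately show ?thesis
    unfolding ray_partition_def ray_partition_on_def lex_less_iff_less by simp
qed

lemma pairwise_eq_iff_eq_hd: "(\<forall>x\<in>set B. \<forall>y\<in>set B. f x = f y) \<longleftrightarrow> (\<forall>x\<in>set B. f x = f (hd B))"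
  by (cases B) auto

lemma witnessed_iff: "witnessed Z Q \<longleftrightarrow> witnessed_by (\<lambda>x. pr_zeta (Z x)) (\<lambda>x. pr_t (Z x)) Q"
  unfolding witnessed_def witnessed_by_def sorted_wrt_iff_nth_less pairwise_eq_iff_eq_hd by blast

lemma finite_table: "finite (table k)"
proof -
  have "table k = (SIGMA i:{1..length k}. {1..kth k i})" by (auto simp: table_def)
  then show ?thesis by simp
qed

lemma Vtilde_inj_on:
  assumes "Vtilde p q k Z" "1 \<le> q"
  shows "inj_on (\<lambda>x. (pr_zeta (Z x), pr_t (Z x))) (table k)"
proof (rule inj_onI)
  fix x y assume xy: "x \<in> table k" "y \<in> table k"
    and eq: "(pr_zeta (Z x), pr_t (Z x)) = (pr_zeta (Z y), pr_t (Z y))"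
  have "Z x \<noteq> []" "Z y \<noteq> []" using assms xy by (auto simp: Vtilde_def)
  then have "Z x = Z y" using eq unfolding pr_zeta_def pr_t_def by (metis append_butlast_last_id prod.inject)
  then show "x = y" using assms(1) xy by (auto simp: Vtilde_def dest: inj_onD)
qed

lemma Vtilde_row_same_zeta:
  assumes "Vtilde p 1 k Z" "(i, j) \<in> table k" "(i, j') \<in> table k"
  shows "pr_zeta (Z (i, j)) = pr_zeta (Z (i, j'))"
proof -
  have "take p (Z (i, j)) = take p (Z (i, j'))"
    using assms unfolding Vtilde_def pr_1_def by blast
  moreover have "length (Z (i, j)) = Suc p" "length (Z (i, j')) = Suc p"
    using assms unfolding Vtilde_def by simp_all
  ultimately show ?thesis by (simp add: pr_zeta_def butlast_conv_take)
qed

lemma pad_lexord: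
  "first_difference_less (weight Q') (weight Q) \<Longrightarrow> (pad k (weight Q'), pad k (weight Q)) \<in> lexord less_than"
  unfolding pad_def by (rule first_difference_less_append_lexord)

lemma max_witnessed_iff_eq:
  assumes "ray_partition k Q0" "witnessed Z Q0"
    and dominant: "\<And>Q. ray_partition k Q \<Longrightarrow> witnessed Z Q \<Longrightarrow>
                     Q = Q0 \<or> (pad k (weight Q), pad k (weight Q0)) \<in> lexord less_than"
  shows "max_witnessed k Z Q \<longleftrightarrow> Q = Q0"
proof
  assume max: "max_witnessed k Z Q"
  show "Q = Q0"
  proof (rule ccontr)
    assume "Q \<noteq> Q0"
    then have "(pad k (weight Q), pad k (weight Q0)) \<in> lexord less_than"
      using max dominant by (auto simp: max_witnessed_def)
    moreover have "lex_le (pad k (weight Q0)) (pad k (weight Q))"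
      using max assms(1,2) by (simp add: max_witnessed_def)
    ultimately show False
      using lexord_asymmetric[OF asym_less_than] lexord_irreflexive[of less_than]
      by (auto simp: lex_le_def)
  qed
qed (use assms in \<open>auto simp: max_witnessed_def lex_le_def\<close>)

lemma row_of_stacked:
  assumes V: "Vtilde p 1 k Z" and sig: "valid_Sigma k sig" "in_component k sig Z"
    and Q: "ray_partition_on (table k) Q"
    and stacked: "sorted_wrt (\<lambda>x y. pr_zeta (Z x) = pr_zeta (Z y) \<longrightarrow> pr_t (Z x) < pr_t (Z y)) (stacked Q)"
    and i: "i \<in> {1..length k}"
  shows "filter (\<lambda>x. fst x = i) (stacked Q) = map (\<lambda>j. (i, sig i j)) [1..<Suc (kth k i)]"
    (is "?F = ?G")
proof -
  let ?t = "\<lambda>x. pr_t (Z x)" and ?R = "Pair i ` {1..kth k i}"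
  have R: "?R = {x \<in> table k. fst x = i}" using i by (auto simp: table_def)
  have same_zeta: "pr_zeta (Z x) = pr_zeta (Z y)" if xy: "x \<in> ?R" "y \<in> ?R" for x y
  proof -
    obtain j j' where x: "x = (i, j)" and y: "y = (i, j')" using xy by blast
    have "(i, j) \<in> table k" "(i, j') \<in> table k" using xy unfolding x y R by simp_all
    then show ?thesis unfolding x y by (rule Vtilde_row_same_zeta[OF V])
  qed
  have inj: "inj_on ?t ?R"
  proof (rule inj_onI)
    fix x y assume xy: "x \<in> ?R" "y \<in> ?R" "?t x = ?t y"
    then have "(pr_zeta (Z x), ?t x) = (pr_zeta (Z y), ?t y)" using same_zeta[OF xy(1,2)] by simp
    moreover have "x \<in> table k" "y \<in> table k" using xy(1,2) unfolding R by simp_all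
    ultimately show "x = y" using inj_onD[OF Vtilde_inj_on[OF V order_refl]] by blast
  qed
  have setF: "set ?F = ?R" using Q R by (simp add: stacked_def ray_partition_on_def)
  have sortedF: "sorted_wrt (\<lambda>x y. ?t x < ?t y) ?F"
    using sorted_wrt_filter[OF stacked]
  proof (rule sorted_wrt_mono_rel[rotated])
    fix x y assume "x \<in> set ?F" "y \<in> set ?F"
      and "pr_zeta (Z x) = pr_zeta (Z y) \<longrightarrow> ?t x < ?t y"
    then show "?t x < ?t y" using same_zeta[of x y] unfolding setF by blast
  qed
  have "?t (i, sig i (Suc n)) < ?t (i, sig i (Suc (Suc n)))" if "Suc n < kth k i" for n
    using sig(2) i that by (simp add: in_component_def)
  then have sortedG: "sorted_wrt (\<lambda>x y. ?t x < ?t y) ?G"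
    by (simp add: sorted_wrt_iff_nth_Suc_transp transp_def del: upt_Suc)
  have "set ?G = Pair i ` sig i ` {1..kth k i}"
    by (simp only: set_map set_upt atLeastLessThanSuc_atLeastAtMost image_image)
  also have "\<dots> = ?R"
    using sig(1) i by (simp add: valid_Sigma_def permutes_image)
  finally have "set ?G = ?R" .
  then show ?thesis using sorted_by_key_unique[OF sortedF sortedG] setF inj by simp
qed

lemma Sigma_of_eq_if_stacked_sorted:
  assumes "Vtilde p 1 k Z" "valid_Sigma k sig" "in_component k sig Z"
    and "ray_partition_on (table k) Q"
    and "sorted_wrt (\<lambda>x y. pr_zeta (Z x) = pr_zeta (Z y) \<longrightarrow> pr_t (Z x) < pr_t (Z y)) (stacked Q)"
  shows "Sigma_of_eq k Q sig"
  unfolding Sigma_of_eq_def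
proof (intro ballI)
  fix i j assume i: "i \<in> {1..length k}" and j: "j \<in> {1..kth k i}"
  then have "map (\<lambda>j. (i, sig i j)) [1..<Suc (kth k i)] ! (j - 1) = (i, sig i j)"
    by (auto simp del: upt_Suc)
  then show "sig i j = snd (filter (\<lambda>x. fst x = i) (stacked Q) ! (j - 1))"
    using row_of_stacked[OF assms i] by simp
qed

theorem lemma3p10:
  fixes p q :: nat and k :: "nat list" and Z :: "nat \<times> nat \<Rightarrow> real list"
  assumes "q \<ge> 1"
    and "\<forall>ki\<in>set k. ki \<ge> 1"
    and "Vtilde p q k Z"
  shows "(\<exists>!Q. max_witnessed k Z Q) \<and>
         (q = 1 \<longrightarrow> (\<forall>sig. valid_Sigma k sig \<and> in_component k sig Z \<longrightarrow>
            (\<forall>Q. max_witnessed k Z Q \<longrightarrow> Sigma_of_eq k Q sig)))"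
proof -
  let ?\<zeta> = "\<lambda>x. pr_zeta (Z x)" and ?\<tau> = "\<lambda>x. pr_t (Z x)"
  obtain Q0 where Q0: "dominant_ray_partition ?\<zeta> ?\<tau> (table k) Q0"
    using dominant_ray_partition_exists[OF finite_table Vtilde_inj_on[OF assms(3,1)]] by blast
  have max_iff: "max_witnessed k Z Q \<longleftrightarrow> Q = Q0" for Q
  proof (rule max_witnessed_iff_eq)
    show "ray_partition k Q0" "witnessed Z Q0"
      using Q0 by (simp_all add: dominant_ray_partition_def ray_partition_iff witnessed_iff)
    show "Q' = Q0 \<or> (pad k (weight Q'), pad k (weight Q0)) \<in> lexord less_than"
      if "ray_partition k Q'" "witnessed Z Q'" for Q'
      using Q0 that pad_lexord
      by (auto simp: dominant_ray_partition_def ray_partition_iff witnessed_iff weight_def)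
  qed
  have "Sigma_of_eq k Q0 sig" if "q = 1" "valid_Sigma k sig" "in_component k sig Z" for sig
    using Sigma_of_eq_if_stacked_sorted[of p k Z sig Q0] that assms(3) Q0
    by (simp add: dominant_ray_partition_def stacked_def)
  then show ?thesis using max_iff by auto
qed

end
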